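(* Let $\mathfrak{R}$ be either $\mathbb{F}_q$ ($q$ a prime power) or $\mathbb{Z}_k$ ($k\ge2$), with elements listed as $0=\omega_0,\omega_1,\dots,\omega_{|\mathfrak{R}|-1}$. Let $C$ be an $\mathfrak{R}$-linear code of length $n$ and $\bm{w}\in\mathfrak{R}^n$. Then \[ Jac^{av}(C,\bm{w}; x_{a} : a \in \mathfrak{R}^{2}) =\sum_{L,R} A_{L}^{C}\, \frac{\prod_{b\in\mathfrak{R}}\binom{\ell_b(\bm{w})}{R_{(\omega_0,b)},\ldots,R_{(\omega_{|\mathfrak{R}|-1},b)}}}{\binom{n}{L_{\omega_0},\ldots,L_{\omega_{|\mathfrak{R}|-1}}}} \prod_{a\in\mathfrak{R}^2}x_a^{R_a}, \] where the sum runs over all compositions $L$ of $n$ and all Jacobi compositions $R$ of $n$ satisfying $L_c=\sum_{b\in\mathfrak{R}}R_{(c,b)}$ for every $c\in\mathfrak{R}$ and $\ell_c(\bm{w})=\sum_{b\in\mathfrak{R}}R_{(b,c)}$ for every $c\in\mathfrak{R}$.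
   Context: An $\mathbb{F}_q$-linear code of length $n$ is a subspace of $\mathbb{F}_q^n$; a $\mathbb{Z}_k$-linear code is an additive subgroup of $\mathbb{Z}_k^n$. For $\bm{u}\in\mathfrak{R}^n$ and $a\in\mathfrak{R}$, $\ell_a(\bm{u})$ is the number of coordinates of $\bm{u}$ equal to $a$. A composition of $n$ is a vector $L=(L_a:a\in\mathfrak{R})$ of non-negative integers with $\sum_a L_a=n$; a Jacobi composition of $n$ is a vector $R=(R_a:a\in\mathfrak{R}^2)$ of non-negative integers with $\sum_a R_a=n$. $A_L^C=\#\{\bm{u}\in C : \ell_a(\bm{u})=L_a \ \forall a\in\mathfrak{R}\}$. For $a\in\mathfrak{R}^2$, $r_a(\bm{u};\bm{w})=\#\{i:(u_i,w_i)=a\}$, and $Jac(C,\bm{w};x_a:a\in\mathfrak{R}^2)=\sum_{\bm{u}\in C}\prod_{a\in\mathfrak{R}^2}x_a^{r_a(\bm{u};\bm{w})}$. For $\sigma\in S_n$, $\bm{u}^\sigma=(u_{\sigma(1)},\dots,u_{\sigma(n)})$ and $C^\sigma=\{\bm{u}^\sigma:\bm{u}\in C\}$; $Jac^{av}(C,\bm{w};x_a:a\in\mathfrak{R}^2)=\frac{1}{n!}\sum_{\sigma\in S_n}Jac(C^\sigma,\bm{w};x_a:a\in\mathfrak{R}^2)$. Multinomial coefficients: $\binom{m}{m_1,\dots,m_k}=\frac{m!}{m_1!\cdots m_k!}$. *)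

theory Defs
  imports Complex_Main "HOL-Combinatorics.Permutations"
begin

text \<open>Words of length n over a finite ring 'r are lists of length n; coordinates are 0-indexed.\<close>

definition linear_code :: "nat \<Rightarrow> ('r::comm_ring_1) list set \<Rightarrow> bool" where
  "linear_code n C \<longleftrightarrow> C \<subseteq> {u. length u = n} \<and> replicate n 0 \<in> C \<and>
     (\<forall>u\<in>C. \<forall>v\<in>C. map2 (+) u v \<in> C) \<and> (\<forall>c. \<forall>u\<in>C. map ((*) c) u \<in> C)"

definition ell :: "'a \<Rightarrow> 'a list \<Rightarrow> nat" where
  "ell a u = card {i. i < length u \<and> u ! i = a}"

definition rcount :: "'a \<times> 'a \<Rightarrow> 'a list \<Rightarrow> 'a list \<Rightarrow> nat" where
  "rcount a u w = card {i. i < length u \<and> i < length w \<and> (u ! i, w ! i) = a}"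

definition compositions :: "nat \<Rightarrow> ('r::finite \<Rightarrow> nat) set" where
  "compositions n = {L. (\<Sum>a\<in>UNIV. L a) = n}"

definition jacobi_compositions :: "nat \<Rightarrow> ('r::finite \<times> 'r \<Rightarrow> nat) set" where
  "jacobi_compositions n = {R. (\<Sum>a\<in>UNIV. R a) = n}"

definition weight_count :: "'r::finite list set \<Rightarrow> ('r \<Rightarrow> nat) \<Rightarrow> nat" where
  "weight_count C L = card {u\<in>C. \<forall>a. ell a u = L a}"

definition multinomial :: "nat \<Rightarrow> ('i::finite \<Rightarrow> nat) \<Rightarrow> nat" where
  "multinomial m f = fact m div (\<Prod>a\<in>UNIV. fact (f a))"

definition jac :: "'r::finite list set \<Rightarrow> 'r list \<Rightarrow> ('r \<times> 'r \<Rightarrow> 'c::comm_semiring_1) \<Rightarrow> 'c" where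
  "jac C w x = (\<Sum>u\<in>C. \<Prod>a\<in>UNIV. x a ^ rcount a u w)"

definition perm_word :: "nat \<Rightarrow> (nat \<Rightarrow> nat) \<Rightarrow> 'a list \<Rightarrow> 'a list" where
  "perm_word n \<sigma> u = map (\<lambda>i. u ! \<sigma> i) [0..<n]"

definition jac_av :: "nat \<Rightarrow> 'r::finite list set \<Rightarrow> 'r list \<Rightarrow> ('r \<times> 'r \<Rightarrow> real) \<Rightarrow> real" where
  "jac_av n C w x = (1 / fact n) * (\<Sum>\<sigma>\<in>{\<sigma>. \<sigma> permutes {..<n}}. jac (perm_word n \<sigma> ` C) w x)"

end

theory Submission
  imports Defs
begin

text \<open>
  For a single codeword u, the monomial of the pair (u permuted by \<sigma>, w) depends only on their
  joint profile R, the table counting the positions i with (u (\<sigma> i), w i) = a; its row sums are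
  the composition L of u and its column sums the composition l of w. Conditioning on \<sigma> n and
  inducting on n shows that exactly (\<Prod>c. L c!) (\<Prod>b. l b!) / (\<Prod>a. R a!) permutations have
  profile R; divided by n! this is the quotient of multinomial coefficients in the statement.
  Grouping the codewords by composition then produces the factor A_L.
\<close>

definition occurrences :: "nat \<Rightarrow> (nat \<Rightarrow> 'a) \<Rightarrow> 'a \<Rightarrow> nat" where
  "occurrences n U c = card {i. i < n \<and> U i = c}"

lemma occurrences_0 [simp]: "occurrences 0 U c = 0"
  by (simp add: occurrences_def)

lemma occurrences_Suc: "occurrences (Suc n) U c = occurrences n U c + of_bool (U n = c)"
proof -
  have "{i. i < Suc n \<and> U i = c} = {i. i < n \<and> U i = c} \<union> (if U n = c then {n} else {})"
    by (auto simp: less_Suc_eq)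
  then show ?thesis
    unfolding occurrences_def by (auto simp: card_insert_if)
qed

lemma occurrences_nth: "length u = n \<Longrightarrow> occurrences n (nth u) c = ell c u"
  unfolding occurrences_def ell_def by simp

lemma sum_lessThan_by_occurrences:
  fixes f :: "'a::finite \<Rightarrow> 'b::comm_semiring_1"
  shows "(\<Sum>i<n. f (U i)) = (\<Sum>c\<in>UNIV. of_nat (occurrences n U c) * f c)"
proof (induction n)
  case (Suc n)
  have "(\<Sum>c\<in>UNIV. of_bool (U n = c) * f c) = f (U n)"
    by simp
  with Suc show ?case
    by (simp add: occurrences_Suc sum.distrib distrib_right)
qed simp

lemma sum_occurrences: "(\<Sum>c\<in>(UNIV::'a::finite set). occurrences n U c) = n"
  using sum_lessThan_by_occurrences[where f = "\<lambda>_. 1::nat" and U = U] by simp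

lemma occurrences_comp_permutes:
  assumes "\<sigma> permutes {..<n}"
  shows "occurrences n (U \<circ> \<sigma>) = occurrences n U"
proof
  fix c
  let ?A = "{i. i < n \<and> U (\<sigma> i) = c}"
  have "\<sigma> ` ?A = {j \<in> \<sigma> ` {..<n}. U j = c}"
    by auto
  also have "\<dots> = {i. i < n \<and> U i = c}"
    using permutes_image[OF assms] by auto
  finally have "occurrences n U c = card (\<sigma> ` ?A)"
    unfolding occurrences_def by simp
  also have "\<dots> = card ?A"
    using permutes_inj[OF assms] by (intro card_image) (auto intro: inj_on_subset)
  finally show "occurrences n (U \<circ> \<sigma>) c = occurrences n U c"
    unfolding occurrences_def by simp
qed

lemma occurrences_Suc_transpose:
  assumes "j \<le> n"
  shows "occurrences (Suc n) U c =
    occurrences n (U \<circ> Transposition.transpose n j) c + of_bool (U j = c)"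
proof -
  have "Transposition.transpose n j permutes {..<Suc n}"
    using assms by (intro permutes_swap_id) auto
  then have "occurrences (Suc n) U c = occurrences (Suc n) (U \<circ> Transposition.transpose n j) c"
    by (simp add: occurrences_comp_permutes)
  then show ?thesis
    by (simp add: occurrences_Suc)
qed

lemma sum_occurrences_fst:
  fixes V :: "nat \<Rightarrow> 'a \<times> 'b::finite"
  shows "(\<Sum>b\<in>UNIV. occurrences n V (c, b)) = occurrences n (fst \<circ> V) c"
proof -
  have "{i. i < n \<and> (fst \<circ> V) i = c} = (\<Union>b. {i. i < n \<and> V i = (c, b)})"
    by (auto intro: prod.collapse[symmetric])
  then have "occurrences n (fst \<circ> V) c = card (\<Union>b. {i. i < n \<and> V i = (c, b)})"
    unfolding occurrences_def by simp
  also have "\<dots> = (\<Sum>b\<in>UNIV. occurrences n V (c, b))"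
    unfolding occurrences_def by (rule card_UN_disjoint) auto
  finally show ?thesis ..
qed

lemma sum_occurrences_snd:
  fixes V :: "nat \<Rightarrow> 'a::finite \<times> 'b"
  shows "(\<Sum>c\<in>UNIV. occurrences n V (c, b)) = occurrences n (snd \<circ> V) b"
proof -
  have "{i. i < n \<and> (snd \<circ> V) i = b} = (\<Union>c. {i. i < n \<and> V i = (c, b)})"
    by (auto intro: prod.collapse[symmetric])
  then have "occurrences n (snd \<circ> V) b = card (\<Union>c. {i. i < n \<and> V i = (c, b)})"
    unfolding occurrences_def by simp
  also have "\<dots> = (\<Sum>c\<in>UNIV. occurrences n V (c, b))"
    unfolding occurrences_def by (rule card_UN_disjoint) auto
  finally show ?thesis ..
qed

lemma prod_fact_add_of_bool:
  fixes g :: "'a::finite \<Rightarrow> nat"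
  shows "(\<Prod>a\<in>UNIV. fact (g a + of_bool (a0 = a)) :: nat) = (g a0 + 1) * (\<Prod>a\<in>UNIV. fact (g a))"
proof -
  have "(\<Prod>a\<in>UNIV. fact (g a + of_bool (a0 = a)) :: nat) =
      fact (g a0 + 1) * (\<Prod>a\<in>UNIV - {a0}. fact (g a + of_bool (a0 = a)))"
    by (simp add: prod.remove[of UNIV a0])
  also have "(\<Prod>a\<in>UNIV - {a0}. fact (g a + of_bool (a0 = a)) :: nat) = (\<Prod>a\<in>UNIV - {a0}. fact (g a))"
    by (rule prod.cong) auto
  also have "fact (g a0 + 1) * \<dots> = (g a0 + 1) * (\<Prod>a\<in>UNIV. fact (g a))"
    by (simp add: prod.remove[of UNIV a0] algebra_simps)
  finally show ?thesis .
qed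

lemma prod_fact_diff_of_bool:
  fixes g :: "'a::finite \<Rightarrow> nat"
  assumes "0 < g a0"
  shows "(\<Prod>a\<in>UNIV. fact (g a) :: nat) = g a0 * (\<Prod>a\<in>UNIV. fact (g a - of_bool (a0 = a)))"
proof -
  have "(\<Prod>a\<in>UNIV. fact (g a - of_bool (a0 = a)) :: nat) =
      fact (g a0 - 1) * (\<Prod>a\<in>UNIV - {a0}. fact (g a - of_bool (a0 = a)))"
    by (simp add: prod.remove[of UNIV a0])
  also have "(\<Prod>a\<in>UNIV - {a0}. fact (g a - of_bool (a0 = a)) :: nat) = (\<Prod>a\<in>UNIV - {a0}. fact (g a))"
    by (rule prod.cong) auto
  finally show ?thesis
    using assms by (simp add: prod.remove[of UNIV a0] fact_reduce[of "g a0"])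
qed

lemma add_of_bool_eq_iff:
  fixes f R :: "'a \<Rightarrow> nat"
  shows "(\<lambda>a. f a + of_bool (a0 = a)) = R \<longleftrightarrow> 0 < R a0 \<and> f = (\<lambda>a. R a - of_bool (a0 = a))"
  by (auto simp: fun_eq_iff)

definition joint_profile ::
    "nat \<Rightarrow> (nat \<Rightarrow> 'a) \<Rightarrow> (nat \<Rightarrow> 'b) \<Rightarrow> (nat \<Rightarrow> nat) \<Rightarrow> 'a \<times> 'b \<Rightarrow> nat" where
  "joint_profile n U W \<sigma> = occurrences n (\<lambda>i. (U (\<sigma> i), W i))"

lemma joint_profile_row_sum:
  fixes W :: "nat \<Rightarrow> 'b::finite"
  assumes "\<sigma> permutes {..<n}"
  shows "(\<Sum>b\<in>UNIV. joint_profile n U W \<sigma> (c, b)) = occurrences n U c"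
  using occurrences_comp_permutes[OF assms, of U]
  by (simp add: joint_profile_def sum_occurrences_fst comp_def)

lemma joint_profile_column_sum:
  fixes U :: "nat \<Rightarrow> 'a::finite"
  shows "(\<Sum>c\<in>UNIV. joint_profile n U W \<sigma> (c, b)) = occurrences n W b"
  by (simp add: joint_profile_def sum_occurrences_snd comp_def)

lemma sum_joint_profile: "(\<Sum>a\<in>(UNIV::('a::finite \<times> 'b::finite) set). joint_profile n U W \<sigma> a) = n"
  by (simp add: joint_profile_def sum_occurrences)

lemma joint_profile_Suc_transpose_comp:
  assumes "q permutes {..<n}"
  shows "joint_profile (Suc n) U W (Transposition.transpose n j \<circ> q) a =
    joint_profile n (U \<circ> Transposition.transpose n j) W q a + of_bool ((U j, W n) = a)"
  using permutes_not_in[OF assms, of n]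
  by (simp add: joint_profile_def occurrences_Suc)

lemma card_joint_profile_Suc:
  "card {\<sigma>. \<sigma> permutes {..<Suc n} \<and> joint_profile (Suc n) U W \<sigma> = R} =
    (\<Sum>j\<le>n. card {q. q permutes {..<n} \<and>
      (\<lambda>a. joint_profile n (U \<circ> Transposition.transpose n j) W q a + of_bool ((U j, W n) = a)) = R})"
proof -
  let ?t = "Transposition.transpose n" and ?P = "{q. q permutes {..<n}}"
  have "card {\<sigma>. \<sigma> permutes {..<Suc n} \<and> joint_profile (Suc n) U W \<sigma> = R} =
      (\<Sum>\<sigma>\<in>{\<sigma>. \<sigma> permutes insert n {..<n}}. of_bool (joint_profile (Suc n) U W \<sigma> = R))"
    by (simp add: lessThan_Suc finite_permutations Int_def conj_commute)
  also have "\<dots> = (\<Sum>j\<in>insert n {..<n}. \<Sum>q\<in>?P. of_bool (joint_profile (Suc n) U W (?t j \<circ> q) = R))"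
    by (rule sum_over_permutations_insert) auto
  also have "\<dots> = (\<Sum>j\<le>n. card {q. q permutes {..<n} \<and>
      (\<lambda>a. joint_profile n (U \<circ> ?t j) W q a + of_bool ((U j, W n) = a)) = R})"
  proof (rule sum.cong)
    fix j
    have "(\<Sum>q\<in>?P. of_bool (joint_profile (Suc n) U W (?t j \<circ> q) = R)) =
        (\<Sum>q\<in>?P. of_bool ((\<lambda>a. joint_profile n (U \<circ> ?t j) W q a + of_bool ((U j, W n) = a)) = R))"
      by (rule sum.cong) (simp_all add: joint_profile_Suc_transpose_comp fun_eq_iff)
    also have "\<dots> = card {q. q permutes {..<n} \<and>
        (\<lambda>a. joint_profile n (U \<circ> ?t j) W q a + of_bool ((U j, W n) = a)) = R}"
      by (simp add: finite_permutations Int_def)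
    finally show "(\<Sum>q\<in>?P. of_bool (joint_profile (Suc n) U W (?t j \<circ> q) = R)) = \<dots>" .
  qed auto
  finally show ?thesis .
qed

lemma sum_transpose_prod_fact_occurrences:
  fixes U :: "nat \<Rightarrow> 'a::finite" and r :: "'a \<Rightarrow> nat"
  assumes "\<And>c. occurrences (Suc n) U c = 0 \<Longrightarrow> r c = 0"
  shows "(\<Sum>j\<le>n. r (U j) * (\<Prod>c\<in>UNIV. fact (occurrences n (U \<circ> Transposition.transpose n j) c))) =
    (\<Sum>c\<in>UNIV. r c) * (\<Prod>c\<in>UNIV. fact (occurrences (Suc n) U c))"
proof -
  let ?t = "Transposition.transpose n" and ?L = "occurrences (Suc n) U"
  define g where "g d = r d * (\<Prod>c\<in>UNIV. fact (?L c - of_bool (d = c)))" for d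
  have "(\<Sum>j\<le>n. r (U j) * (\<Prod>c\<in>UNIV. fact (occurrences n (U \<circ> ?t j) c))) =
      (\<Sum>j<Suc n. g (U j))"
    unfolding lessThan_Suc_atMost g_def
    by (intro sum.cong refl arg_cong2[where f = "(*)"] prod.cong)
      (auto simp: occurrences_Suc_transpose[of _ n U])
  also have "\<dots> = (\<Sum>d\<in>UNIV. ?L d * g d)"
    by (simp add: sum_lessThan_by_occurrences)
  also have "\<dots> = (\<Sum>d\<in>UNIV. r d * (\<Prod>c\<in>UNIV. fact (?L c)))"
  proof (rule sum.cong)
    fix d
    show "?L d * g d = r d * (\<Prod>c\<in>UNIV. fact (?L c))"
      using assms[of d] prod_fact_diff_of_bool[of ?L d] by (cases "?L d = 0") (simp_all add: g_def)
  qed simp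
  finally show ?thesis
    by (simp add: sum_distrib_right)
qed

lemma card_joint_profile:
  fixes U :: "nat \<Rightarrow> 'a::finite" and W :: "nat \<Rightarrow> 'b::finite"
  assumes "\<And>c. (\<Sum>b\<in>UNIV. R (c, b)) = occurrences n U c"
    and "\<And>b. (\<Sum>c\<in>UNIV. R (c, b)) = occurrences n W b"
  shows "card {\<sigma>. \<sigma> permutes {..<n} \<and> joint_profile n U W \<sigma> = R} * (\<Prod>a\<in>UNIV. fact (R a)) =
    (\<Prod>c\<in>UNIV. fact (occurrences n U c)) * (\<Prod>b\<in>UNIV. fact (occurrences n W b))"
  using assms
proof (induction n arbitrary: U R)
  case 0
  then have "R = (\<lambda>_. 0)"
    by (auto simp: fun_eq_iff)
  moreover have "joint_profile 0 U W = (\<lambda>_. \<lambda>_. 0)"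
    by (simp add: joint_profile_def fun_eq_iff)
  ultimately show ?case
    by simp
next
  case (Suc n)
  let ?t = "Transposition.transpose n"
  let ?L = "occurrences (Suc n) U" and ?l = "occurrences n W"
  have summand: "card {q. q permutes {..<n} \<and>
        (\<lambda>a. joint_profile n (U \<circ> ?t j) W q a + of_bool ((U j, W n) = a)) = R} *
      (\<Prod>a\<in>UNIV. fact (R a)) =
      R (U j, W n) * ((\<Prod>c\<in>UNIV. fact (occurrences n (U \<circ> ?t j) c)) * (\<Prod>b\<in>UNIV. fact (?l b)))"
    if "j \<le> n" for j
  proof (cases "R (U j, W n) = 0")
    case True
    then show ?thesis
      by (simp add: add_of_bool_eq_iff)
  next
    case False
    define R' where "R' a = R a - of_bool ((U j, W n) = a)" for a
    have R: "R a = R' a + of_bool ((U j, W n) = a)" for a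
      using False by (cases "(U j, W n) = a") (auto simp: R'_def)
    have rows: "(\<Sum>b\<in>UNIV. R' (c, b)) = occurrences n (U \<circ> ?t j) c" for c
    proof -
      have "(\<Sum>b\<in>UNIV. of_bool ((U j, W n) = (c, b)) :: nat) = of_bool (U j = c)"
        by (cases "U j = c") auto
      then show ?thesis
        using Suc.prems(1)[of c] occurrences_Suc_transpose[OF that, of U c]
        by (simp add: R sum.distrib)
    qed
    have columns: "(\<Sum>c\<in>UNIV. R' (c, b)) = ?l b" for b
    proof -
      have "(\<Sum>c\<in>UNIV. of_bool ((U j, W n) = (c, b)) :: nat) = of_bool (W n = b)"
        by (cases "W n = b") auto
      then show ?thesis
        using Suc.prems(2)[of b] by (simp add: R sum.distrib occurrences_Suc)
    qed
    have "{q. q permutes {..<n} \<and> (\<lambda>a. joint_profile n (U \<circ> ?t j) W q a + of_bool ((U j, W n) = a)) = R} =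
        {q. q permutes {..<n} \<and> joint_profile n (U \<circ> ?t j) W q = R'}"
      using False by (simp add: add_of_bool_eq_iff R'_def[abs_def])
    moreover have "(\<Prod>a\<in>UNIV. fact (R a)) = R (U j, W n) * (\<Prod>a\<in>UNIV. fact (R' a))"
      using prod_fact_add_of_bool[of R' "(U j, W n)"] by (simp add: R)
    ultimately show ?thesis
      using Suc.IH[OF rows columns] by (simp only: mult.left_commute)
  qed
  have "card {\<sigma>. \<sigma> permutes {..<Suc n} \<and> joint_profile (Suc n) U W \<sigma> = R} * (\<Prod>a\<in>UNIV. fact (R a)) =
      (\<Sum>j\<le>n. R (U j, W n) * (\<Prod>c\<in>UNIV. fact (occurrences n (U \<circ> ?t j) c))) * (\<Prod>b\<in>UNIV. fact (?l b))"
    by (simp add: card_joint_profile_Suc sum_distrib_right summand mult.assoc)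
  also have "\<dots> = (\<Sum>c\<in>UNIV. R (c, W n)) * (\<Prod>c\<in>UNIV. fact (?L c)) * (\<Prod>b\<in>UNIV. fact (?l b))"
  proof -
    have "R (c, W n) = 0" if "?L c = 0" for c
      using Suc.prems(1)[of c] member_le_sum[of "W n" UNIV "\<lambda>b. R (c, b)"] that by simp
    from sum_transpose_prod_fact_occurrences[where r = "\<lambda>c. R (c, W n)", OF this]
    show ?thesis
      by (simp only:)
  qed
  also have "\<dots> = (\<Prod>c\<in>UNIV. fact (?L c)) * (\<Prod>b\<in>UNIV. fact (occurrences (Suc n) W b))"
    using prod_fact_add_of_bool[of ?l "W n"] Suc.prems(2)[of "W n"]
    by (simp add: occurrences_Suc algebra_simps)
  finally show ?case .
qed

lemma prod_fact_dvd_fact_sum: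
  "finite A \<Longrightarrow> (\<Prod>a\<in>A. fact (f a)) dvd (fact (\<Sum>a\<in>A. f a) :: nat)"
proof (induction A rule: finite_induct)
  case (insert a A)
  then have "fact (f a) * (\<Prod>a\<in>A. fact (f a)) dvd fact (f a) * (fact (\<Sum>a\<in>A. f a) :: nat)"
    by (simp add: mult_dvd_mono)
  also have "\<dots> dvd fact (f a + (\<Sum>a\<in>A. f a))"
    by (rule fact_fact_dvd_fact)
  finally show ?case
    using insert by simp
qed simp

lemma of_nat_multinomial:
  fixes f :: "'i::finite \<Rightarrow> nat"
  assumes "(\<Sum>a\<in>UNIV. f a) = m"
  shows "real (multinomial m f) = fact m / (\<Prod>a\<in>UNIV. fact (f a))"
  using prod_fact_dvd_fact_sum[of UNIV f] assms
  by (simp add: multinomial_def real_of_nat_div)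

lemma card_joint_profile_multinomial:
  fixes U :: "nat \<Rightarrow> 'a::finite" and W :: "nat \<Rightarrow> 'b::finite"
  assumes rows: "\<And>c. (\<Sum>b\<in>UNIV. R (c, b)) = occurrences n U c"
    and columns: "\<And>b. (\<Sum>c\<in>UNIV. R (c, b)) = occurrences n W b"
  shows "real (card {\<sigma>. \<sigma> permutes {..<n} \<and> joint_profile n U W \<sigma> = R}) / fact n =
    (\<Prod>b\<in>UNIV. real (multinomial (occurrences n W b) (\<lambda>c. R (c, b)))) /
      real (multinomial n (occurrences n U))"
proof -
  have "(\<Prod>b\<in>UNIV. \<Prod>c\<in>UNIV. fact (R (c, b)) :: real) = (\<Prod>a\<in>UNIV. fact (R a))"
    by (subst prod.swap) (simp add: prod.cartesian_product)
  then have B: "(\<Prod>b\<in>UNIV. real (multinomial (occurrences n W b) (\<lambda>c. R (c, b)))) =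
      (\<Prod>b\<in>UNIV. fact (occurrences n W b)) / (\<Prod>a\<in>UNIV. fact (R a))"
    by (simp add: of_nat_multinomial columns prod_dividef)
  have M: "real (multinomial n (occurrences n U)) = fact n / (\<Prod>c\<in>UNIV. fact (occurrences n U c))"
    by (simp add: of_nat_multinomial sum_occurrences)
  have "real (card {\<sigma>. \<sigma> permutes {..<n} \<and> joint_profile n U W \<sigma> = R}) * (\<Prod>a\<in>UNIV. fact (R a)) =
      (\<Prod>c\<in>UNIV. fact (occurrences n U c)) * (\<Prod>b\<in>UNIV. fact (occurrences n W b))"
    using arg_cong[OF card_joint_profile[OF rows columns], of real] by simp
  then have K: "real (card {\<sigma>. \<sigma> permutes {..<n} \<and> joint_profile n U W \<sigma> = R}) =
      (\<Prod>c\<in>UNIV. fact (occurrences n U c)) * (\<Prod>b\<in>UNIV. fact (occurrences n W b)) /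
      (\<Prod>a\<in>UNIV. fact (R a))"
    by (simp add: eq_divide_eq)
  show ?thesis
    unfolding B M K by simp
qed

lemma finite_sum_eq_UNIV: "finite {f :: 'a::finite \<Rightarrow> nat. (\<Sum>a\<in>UNIV. f a) = n}"
proof (rule finite_subset)
  show "{f :: 'a \<Rightarrow> nat. (\<Sum>a\<in>UNIV. f a) = n} \<subseteq>
      {f. \<forall>a. (a \<in> UNIV \<longrightarrow> f a \<in> {..n}) \<and> (a \<notin> UNIV \<longrightarrow> f a = 0)}"
  proof (intro subsetI CollectI allI conjI impI)
    fix f :: "'a \<Rightarrow> nat" and a
    assume "f \<in> {f. (\<Sum>a\<in>UNIV. f a) = n}"
    then show "f a \<in> {..n}"
      using member_le_sum[of a UNIV f] by simp
  qed simp
qed (rule finite_set_of_finite_funs; simp)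

lemma rcount_perm_word:
  assumes "length u = n" "length w = n"
  shows "rcount a (perm_word n \<sigma> u) w = joint_profile n (nth u) (nth w) \<sigma> a"
  using assms unfolding rcount_def joint_profile_def occurrences_def perm_word_def
  by (intro arg_cong[where f = card]) auto

lemma inj_on_perm_word:
  assumes "\<sigma> permutes {..<n}"
  shows "inj_on (perm_word n \<sigma>) {u. length u = n}"
proof (rule inj_onI)
  fix u v :: "'a list"
  assume u: "u \<in> {u. length u = n}" and v: "v \<in> {u. length u = n}"
    and eq: "perm_word n \<sigma> u = perm_word n \<sigma> v"
  show "u = v"
  proof (rule nth_equalityI)
    fix k
    assume "k < length u"
    then have "k \<in> \<sigma> ` {..<n}"
      using u permutes_image[OF assms] by simp
    then obtain i where "i < n" "k = \<sigma> i"
      by auto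
    then show "u ! k = v ! k"
      using arg_cong[OF eq, of "\<lambda>xs. xs ! i"] by (simp add: perm_word_def)
  qed (use u v in simp)
qed

lemma finite_words_length_eq: "C \<subseteq> {u. length u = n} \<Longrightarrow> finite (C :: 'a::finite list set)"
  using finite_lists_length_eq[of "UNIV :: 'a set" n] by (auto intro: finite_subset)

lemma jac_av_eq_sum_singletons:
  fixes C :: "'r::finite list set"
  assumes "C \<subseteq> {u. length u = n}"
  shows "jac_av n C w x = (\<Sum>u\<in>C. jac_av n {u} w x)"
proof -
  have "jac (perm_word n \<sigma> ` C) w x = (\<Sum>u\<in>C. jac {perm_word n \<sigma> u} w x)"
    if "\<sigma> permutes {..<n}" for \<sigma>
    using inj_on_subset[OF inj_on_perm_word[OF that] assms] by (simp add: jac_def sum.reindex)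
  then have "(\<Sum>\<sigma>\<in>{\<sigma>. \<sigma> permutes {..<n}}. jac (perm_word n \<sigma> ` C) w x) =
      (\<Sum>u\<in>C. \<Sum>\<sigma>\<in>{\<sigma>. \<sigma> permutes {..<n}}. jac (perm_word n \<sigma> ` {u}) w x)"
    by (simp add: sum.swap[of _ _ C])
  then show ?thesis
    by (simp add: jac_av_def sum_distrib_left)
qed

lemma jac_av_singleton:
  fixes u w :: "'r::finite list" and x :: "'r \<times> 'r \<Rightarrow> real"
  assumes u: "length u = n" and w: "length w = n"
  shows "jac_av n {u} w x =
    (\<Sum>R\<in>{R\<in>jacobi_compositions n. (\<forall>c. ell c u = (\<Sum>b\<in>UNIV. R (c, b))) \<and>
                                    (\<forall>c. ell c w = (\<Sum>b\<in>UNIV. R (b, c)))}.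
      (\<Prod>b\<in>UNIV. real (multinomial (ell b w) (\<lambda>c. R (c, b)))) / real (multinomial n (\<lambda>c. ell c u)) *
      (\<Prod>a\<in>UNIV. x a ^ R a))"
proof -
  define S where "S = {R\<in>jacobi_compositions n. (\<forall>c. ell c u = (\<Sum>b\<in>UNIV. R (c, b))) \<and>
                                    (\<forall>c. ell c w = (\<Sum>b\<in>UNIV. R (b, c)))}"
  define h where "h R = (\<Prod>a\<in>UNIV. x a ^ R a)" for R
  let ?P = "{\<sigma>. \<sigma> permutes {..<n}}" and ?profile = "joint_profile n (nth u) (nth w)"
  have occurrences_u: "occurrences n (nth u) = (\<lambda>c. ell c u)"
    using occurrences_nth[OF u] by auto
  have occurrences_w: "occurrences n (nth w) = (\<lambda>c. ell c w)"
    using occurrences_nth[OF w] by auto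
  have "finite S"
    unfolding S_def jacobi_compositions_def by (rule finite_subset[OF _ finite_sum_eq_UNIV[of n]]) auto
  moreover have "?profile ` ?P \<subseteq> S"
    by (auto simp: S_def jacobi_compositions_def joint_profile_row_sum joint_profile_column_sum
        sum_joint_profile occurrences_u occurrences_w)
  ultimately have "(\<Sum>\<sigma>\<in>?P. h (?profile \<sigma>)) =
      (\<Sum>R\<in>S. \<Sum>\<sigma>\<in>{\<sigma>\<in>?P. ?profile \<sigma> = R}. h (?profile \<sigma>))"
    by (intro sum.group[symmetric]) (simp_all add: finite_permutations)
  also have "\<dots> = (\<Sum>R\<in>S. real (card {\<sigma>. \<sigma> permutes {..<n} \<and> ?profile \<sigma> = R}) * h R)"
    by (intro sum.cong) auto
  finally have "jac_av n {u} w x =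
      (\<Sum>R\<in>S. real (card {\<sigma>. \<sigma> permutes {..<n} \<and> ?profile \<sigma> = R}) / fact n * h R)"
    by (simp add: jac_av_def jac_def h_def rcount_perm_word[OF u w] sum_distrib_left)
  also have "\<dots> = (\<Sum>R\<in>S. (\<Prod>b\<in>UNIV. real (multinomial (ell b w) (\<lambda>c. R (c, b)))) /
      real (multinomial n (\<lambda>c. ell c u)) * h R)"
    using card_joint_profile_multinomial[of _ n "nth u" "nth w"]
    by (intro sum.cong) (auto simp: S_def occurrences_u occurrences_w)
  finally show ?thesis
    by (simp add: S_def h_def)
qed

lemma sum_words_by_composition:
  fixes C :: "'r::finite list set" and F :: "('r \<Rightarrow> nat) \<Rightarrow> 'b::comm_semiring_1"
  assumes "C \<subseteq> {u. length u = n}"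
  shows "(\<Sum>u\<in>C. F (\<lambda>a. ell a u)) = (\<Sum>L\<in>compositions n. of_nat (weight_count C L) * F L)"
proof -
  have "(\<lambda>u. \<lambda>a. ell a u) ` C \<subseteq> compositions n"
  proof
    fix L
    assume "L \<in> (\<lambda>u. \<lambda>a. ell a u) ` C"
    then obtain u where "u \<in> C" "L = (\<lambda>a. ell a u)"
      by blast
    then show "L \<in> compositions n"
      using assms sum_occurrences[of n "nth u"] occurrences_nth[of u n]
      by (auto simp: compositions_def)
  qed
  then have "(\<Sum>u\<in>C. F (\<lambda>a. ell a u)) =
      (\<Sum>L\<in>compositions n. \<Sum>u\<in>{u\<in>C. (\<lambda>a. ell a u) = L}. F (\<lambda>a. ell a u))"
    using finite_words_length_eq[OF assms] finite_sum_eq_UNIV[of n]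
    by (intro sum.group[symmetric]) (simp_all add: compositions_def)
  also have "\<dots> = (\<Sum>L\<in>compositions n. of_nat (weight_count C L) * F L)"
    by (intro sum.cong) (auto simp: weight_count_def fun_eq_iff)
  finally show ?thesis .
qed

theorem theorem4p2:
  fixes C :: "('r::{finite,comm_ring_1}) list set" and w :: "'r list" and n :: nat
    and x :: "'r \<times> 'r \<Rightarrow> real"
  assumes ring: "(\<forall>a::'r. a \<noteq> 0 \<longrightarrow> (\<exists>b. a * b = 1)) \<or> (\<forall>a::'r. \<exists>m::nat. a = of_nat m)"
    and code: "linear_code n C"
    and w: "length w = n"
  shows "jac_av n C w x =
    (\<Sum>L\<in>compositions n.
      \<Sum>R\<in>{R\<in>jacobi_compositions n. (\<forall>c. L c = (\<Sum>b\<in>UNIV. R (c, b))) \<and>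
                                      (\<forall>c. ell c w = (\<Sum>b\<in>UNIV. R (b, c)))}.
        real (weight_count C L) *
        (\<Prod>b\<in>UNIV. real (multinomial (ell b w) (\<lambda>c. R (c, b)))) / real (multinomial n L) *
        (\<Prod>a\<in>UNIV. x a ^ R a))"
proof -
  define F where "F L = (\<Sum>R\<in>{R\<in>jacobi_compositions n. (\<forall>c. L c = (\<Sum>b\<in>UNIV. R (c, b))) \<and>
                                      (\<forall>c. ell c w = (\<Sum>b\<in>UNIV. R (b, c)))}.
      (\<Prod>b\<in>UNIV. real (multinomial (ell b w) (\<lambda>c. R (c, b)))) / real (multinomial n L) *
      (\<Prod>a\<in>UNIV. x a ^ R a))" for L
  have words: "C \<subseteq> {u. length u = n}"
    using code by (simp add: linear_code_def)
  have "jac_av n C w x = (\<Sum>u\<in>C. jac_av n {u} w x)"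
    by (rule jac_av_eq_sum_singletons[OF words])
  also have "\<dots> = (\<Sum>u\<in>C. F (\<lambda>a. ell a u))"
  proof (rule sum.cong[OF refl])
    fix u
    assume "u \<in> C"
    then have "length u = n"
      using words by auto
    then show "jac_av n {u} w x = F (\<lambda>a. ell a u)"
      unfolding F_def by (rule jac_av_singleton[OF _ w])
  qed
  also have "\<dots> = (\<Sum>L\<in>compositions n. real (weight_count C L) * F L)"
    using words by (rule sum_words_by_composition)
  finally show ?thesis
    by (simp add: F_def sum_distrib_left mult.assoc)
qed

end
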